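(* Let $P$ be a polyomino with consistent parity. Then $B(P,1)$ and $B(P,-1)$ both have consistent parity.
   Context: A cell is a unit square $[i,i+1]\times[j,j+1]$ with $i,j\in\mathbb{Z}$. A polyomino is a finite union of cells. A polyomino $P$ has consistent parity if all first coordinates of its corners have the same parity and all second coordinates of its corners have the same parity. Equivalently, there is an open $2\times 2$ square $S$ such that for all integers $i,j$, the translate $S'=S+(2i,2j)$ satisfies either $S'\subseteq P$ or $S'\cap P=\emptyset$. Distances are measured in the $L_\infty$-norm: $\mathrm{dist}(a,b)=\|a-b\|_\infty$, and $\mathrm{dist}(A,B)=\inf_{a\in A,b\in B}\mathrm{dist}(a,b)$. For $A\subseteq\mathbb{R}^2$ and $r\ge 0$, define $B(A,r)=\{x\in\mathbb{R}^2:\mathrm{dist}(x,A)\le r\}$. For $r<0$, define $B(A,r)=B(A^c,-r)^c$. *)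

theory Defs
  imports "HOL-Analysis.Analysis" "HOL-Library.Extended_Real"
begin

type_synonym pt = "real \<times> real"

definition cell :: "int \<Rightarrow> int \<Rightarrow> pt set" where
  "cell i j = {p. of_int i \<le> fst p \<and> fst p \<le> of_int i + 1 \<and>
                  of_int j \<le> snd p \<and> snd p \<le> of_int j + 1}"

definition polyomino :: "pt set \<Rightarrow> bool" where
  "polyomino P \<longleftrightarrow> (\<exists>C :: (int \<times> int) set. finite C \<and> P = (\<Union>(i,j)\<in>C. cell i j))"

definition linf :: "pt \<Rightarrow> pt \<Rightarrow> real" where
  "linf a b = max \<bar>fst a - fst b\<bar> \<bar>snd a - snd b\<bar>"

text \<open>dist(x,A) = inf over a in A of linf x a, in the extended reals (+infinity for empty A).\<close>
definition setdist :: "pt \<Rightarrow> pt set \<Rightarrow> ereal" where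
  "setdist x A = (INF a\<in>A. ereal (linf x a))"

definition Bnbhd :: "pt set \<Rightarrow> real \<Rightarrow> pt set" where
  "Bnbhd A r = (if 0 \<le> r then {x. setdist x A \<le> ereal r}
                else - {x. setdist x (- A) \<le> ereal (- r)})"

definition open_sq2 :: "real \<Rightarrow> real \<Rightarrow> pt set" where
  "open_sq2 a b = {p. a < fst p \<and> fst p < a + 2 \<and> b < snd p \<and> snd p < b + 2}"

definition consistent_parity :: "pt set \<Rightarrow> bool" where
  "consistent_parity P \<longleftrightarrow> (\<exists>a b. \<forall>i j :: int.
      open_sq2 (a + 2 * of_int i) (b + 2 * of_int j) \<subseteq> P \<or>
      open_sq2 (a + 2 * of_int i) (b + 2 * of_int j) \<inter> P = {})"

end

theory Submission
  imports Defs
begin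

text \<open>Shift the parity squares by \<open>(1,1)\<close>: each shifted square \<open>S'\<close> is centred at a grid vertex
  \<open>v\<close> shared by four parity squares. If every point of \<open>Q\<close> is a limit of interior points, a
  point of \<open>S'\<close> is within distance 1 of \<open>Q\<close> exactly when one of these four squares lies in \<open>Q\<close>:
  a nearby interior point of \<open>Q\<close> can be moved off the two grid lines through \<open>v\<close>, and consistent
  parity then puts its whole parity square into \<open>Q\<close>. As this condition does not depend on the
  point of \<open>S'\<close>, \<open>B(Q,1)\<close> has consistent parity. A polyomino and its open complement both
  qualify as \<open>Q\<close>, and \<open>B(P,-1)\<close> is the complement of \<open>B(-P,1)\<close>.\<close>

definition grid_parity :: "pt set \<Rightarrow> real \<Rightarrow> real \<Rightarrow> bool" where
  "grid_parity Q a b \<longleftrightarrow> (\<forall>i j :: int.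
      open_sq2 (a + 2 * of_int i) (b + 2 * of_int j) \<subseteq> Q \<or>
      open_sq2 (a + 2 * of_int i) (b + 2 * of_int j) \<inter> Q = {})"

lemma consistent_parity_iff_grid_parity:
  "consistent_parity Q \<longleftrightarrow> (\<exists>a b. grid_parity Q a b)"
  by (simp add: consistent_parity_def grid_parity_def)

lemma grid_parity_Compl: "grid_parity (- Q) a b \<longleftrightarrow> grid_parity Q a b"
  unfolding grid_parity_def by blast

lemma open_obtains_off_lines:
  assumes "open V" "V \<noteq> {}"
  obtains q :: pt where "q \<in> V" "fst q \<noteq> c1" "snd q \<noteq> c2"
proof -
  obtain p e where "p \<in> V" "e > 0" and ball: "\<And>y. dist y p < e \<Longrightarrow> y \<in> V"
    using assms unfolding open_dist by blast
  have "infinite ({0<..<e/2} - {c1 - fst p, c2 - snd p})"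
    using \<open>e > 0\<close> by (simp add: Diff_infinite_finite)
  then obtain d where "d \<in> {0<..<e/2} - {c1 - fst p, c2 - snd p}"
    using infinite_imp_nonempty by blast
  then have d: "0 < d" "d < e/2" "d \<noteq> c1 - fst p" "d \<noteq> c2 - snd p" by auto
  define q where "q = (fst p + d, snd p + d)"
  have "dist q p = sqrt ((dist (fst q) (fst p))\<^sup>2 + (dist (snd q) (snd p))\<^sup>2)"
    by (metis dist_Pair_Pair prod.collapse)
  also have "\<dots> \<le> \<bar>dist (fst q) (fst p)\<bar> + \<bar>dist (snd q) (snd p)\<bar>"
    by (rule sqrt_sum_squares_le_sum_abs)
  also have "\<dots> < e" using d by (simp add: q_def dist_real_def)
  finally have "q \<in> V" by (rule ball)
  moreover have "fst q \<noteq> c1" "snd q \<noteq> c2" using d by (auto simp: q_def)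
  ultimately show thesis by (rule that)
qed

lemma setdist_le_linf: "p \<in> Q \<Longrightarrow> setdist x Q \<le> ereal (linf x p)"
  unfolding setdist_def by (rule INF_lower)

lemma setdist_less_iff: "setdist x Q < ereal r \<longleftrightarrow> (\<exists>p\<in>Q. linf x p < r)"
  by (simp add: setdist_def INF_less_iff)

lemma setdist_le_1_iff_adjacent_square:
  assumes Q: "grid_parity Q a b" "Q \<subseteq> closure (interior Q)"
    and x: "x \<in> open_sq2 (a + 1 + 2 * of_int i) (b + 1 + 2 * of_int j)"
  shows "setdist x Q \<le> 1 \<longleftrightarrow>
    (\<exists>s t :: int. s \<in> {0,1} \<and> t \<in> {0,1} \<and>
       open_sq2 (a + 2 * of_int (i + s)) (b + 2 * of_int (j + t)) \<subseteq> Q)"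
proof
  define A where "A = a + 2 + 2 * of_int i"
  define B where "B = b + 2 + 2 * of_int j"
  have x_near: "\<bar>fst x - A\<bar> < 1" "\<bar>snd x - B\<bar> < 1"
    using x by (auto simp: open_sq2_def A_def B_def)
  assume "setdist x Q \<le> 1"
  txt \<open>The infimum need not be attained, so allow slack \<open>e\<close>, small enough to stay in the
    open \<open>4 \<times> 4\<close> box around the vertex \<open>(A, B)\<close>.\<close>
  define e where "e = min (1 - \<bar>fst x - A\<bar>) (1 - \<bar>snd x - B\<bar>)"
  have "e > 0" using x_near by (simp add: e_def)
  then have "setdist x Q < ereal (1 + e)"
    using \<open>setdist x Q \<le> 1\<close> by (simp add: one_ereal_def order_le_less_trans)
  then obtain p where "p \<in> Q" "linf x p < 1 + e"
    by (auto simp: setdist_less_iff)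
  define U where "U = {A - 2<..<A + 2} \<times> {B - 2<..<B + 2}"
  have "\<bar>fst x - fst p\<bar> < 1 + e" "\<bar>snd x - snd p\<bar> < 1 + e"
    using \<open>linf x p < 1 + e\<close> by (simp_all add: linf_def)
  moreover have "e \<le> 1 - \<bar>fst x - A\<bar>" "e \<le> 1 - \<bar>snd x - B\<bar>"
    by (simp_all add: e_def)
  ultimately have "p \<in> U" by (simp add: U_def mem_Times_iff) arith
  have "open U" by (simp add: U_def open_Times)
  have "U \<inter> closure (interior Q) \<noteq> {}" using \<open>p \<in> U\<close> \<open>p \<in> Q\<close> Q(2) by blast
  with \<open>open U\<close> have "U \<inter> interior Q \<noteq> {}" by (simp add: open_Int_closure_eq_empty)
  moreover have "open (U \<inter> interior Q)" using \<open>open U\<close> by blast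
  ultimately obtain q where q: "q \<in> U \<inter> interior Q" "fst q \<noteq> A" "snd q \<noteq> B"
    using open_obtains_off_lines by blast
  define s :: int where "s = (if fst q < A then 0 else 1)"
  define t :: int where "t = (if snd q < B then 0 else 1)"
  have "q \<in> open_sq2 (a + 2 * of_int (i + s)) (b + 2 * of_int (j + t)) \<inter> Q"
    using q interior_subset unfolding open_sq2_def s_def t_def A_def B_def U_def by auto
  with Q(1) have "open_sq2 (a + 2 * of_int (i + s)) (b + 2 * of_int (j + t)) \<subseteq> Q"
    unfolding grid_parity_def by blast
  moreover have "s \<in> {0,1}" "t \<in> {0,1}" by (simp_all add: s_def t_def)
  ultimately show "\<exists>s t :: int. s \<in> {0,1} \<and> t \<in> {0,1} \<and>
       open_sq2 (a + 2 * of_int (i + s)) (b + 2 * of_int (j + t)) \<subseteq> Q"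
    by blast
next
  assume "\<exists>s t :: int. s \<in> {0,1} \<and> t \<in> {0,1} \<and>
       open_sq2 (a + 2 * of_int (i + s)) (b + 2 * of_int (j + t)) \<subseteq> Q"
  then obtain s t :: int where st: "s \<in> {0,1}" "t \<in> {0,1}"
    and sub: "open_sq2 (a + 2 * of_int (i + s)) (b + 2 * of_int (j + t)) \<subseteq> Q" by blast
  define m1 where "m1 = a + 2 * of_int (i + s) + 1"
  define m2 where "m2 = b + 2 * of_int (j + t) + 1"
  have d: "\<bar>fst x - m1\<bar> < 2" "\<bar>snd x - m2\<bar> < 2"
    using x st by (auto simp: open_sq2_def m1_def m2_def)
  txt \<open>The midpoint of \<open>x\<close> and the centre of the adjacent square lies in that square.\<close>
  define z where "z = ((fst x + m1) / 2, (snd x + m2) / 2)"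
  have "z \<in> Q"
    using d sub by (auto simp: open_sq2_def z_def m1_def m2_def abs_if split: if_splits)
  have "setdist x Q \<le> ereal (linf x z)" using \<open>z \<in> Q\<close> by (rule setdist_le_linf)
  also have "\<dots> \<le> 1"
    using d by (auto simp: linf_def z_def abs_if field_simps split: if_splits)
  finally show "setdist x Q \<le> 1" .
qed

lemma grid_parity_unit_neighbourhood:
  assumes "grid_parity Q a b" "Q \<subseteq> closure (interior Q)"
  shows "grid_parity {x. setdist x Q \<le> 1} (a + 1) (b + 1)"
  unfolding grid_parity_def
proof (intro allI)
  fix i j :: int
  show "open_sq2 (a + 1 + 2 * of_int i) (b + 1 + 2 * of_int j) \<subseteq> {x. setdist x Q \<le> 1} \<or>
        open_sq2 (a + 1 + 2 * of_int i) (b + 1 + 2 * of_int j) \<inter> {x. setdist x Q \<le> 1} = {}"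
    using setdist_le_1_iff_adjacent_square[OF assms] by blast
qed

lemma cell_eq_closure_box:
  "cell i j = closure ({of_int i<..<of_int i + 1} \<times> {of_int j<..<of_int j + 1})"
  by (auto simp: cell_def closure_Times)

lemma polyomino_closed: "polyomino P \<Longrightarrow> closed P"
  unfolding polyomino_def cell_eq_closure_box by auto

lemma polyomino_subset_closure_interior:
  assumes "polyomino P"
  shows "P \<subseteq> closure (interior P)"
proof -
  obtain C where C: "P = (\<Union>(i,j)\<in>C. cell i j)"
    using assms unfolding polyomino_def by blast
  have "cell i j \<subseteq> closure (interior P)" if "(i, j) \<in> C" for i j
  proof -
    have "{of_int i<..<of_int i + 1} \<times> {of_int j<..<of_int j + 1} \<subseteq> interior P"
      using that by (intro interior_maximal) (auto simp: C cell_def open_Times)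
    then show ?thesis unfolding cell_eq_closure_box by (rule closure_mono)
  qed
  then show ?thesis using C by blast
qed

theorem lemma3:
  fixes P :: "(real \<times> real) set"
  assumes "polyomino P" and "consistent_parity P"
  shows "consistent_parity (Bnbhd P 1) \<and> consistent_parity (Bnbhd P (-1))"
proof -
  obtain a b where grid: "grid_parity P a b"
    using assms(2) by (auto simp: consistent_parity_iff_grid_parity)
  have "P \<subseteq> closure (interior P)"
    using assms(1) by (rule polyomino_subset_closure_interior)
  with grid have "grid_parity {x. setdist x P \<le> 1} (a + 1) (b + 1)"
    by (rule grid_parity_unit_neighbourhood)
  moreover have "Bnbhd P 1 = {x. setdist x P \<le> 1}"
    by (simp add: Bnbhd_def one_ereal_def)
  moreover have "- P \<subseteq> closure (interior (- P))"
    using polyomino_closed[OF assms(1)] by (simp add: interior_open open_Compl closure_subset)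
  with grid have "grid_parity (- {x. setdist x (- P) \<le> 1}) (a + 1) (b + 1)"
    by (simp add: grid_parity_unit_neighbourhood grid_parity_Compl)
  moreover have "Bnbhd P (-1) = - {x. setdist x (- P) \<le> 1}"
    by (simp add: Bnbhd_def one_ereal_def)
  ultimately show ?thesis by (auto simp: consistent_parity_iff_grid_parity)
qed

end
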